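(* Assume that $d^u_{ij}-\nu s_{ij}\ge 0$ and $d^p_{ij}\ge 0$ for all $j\neq i$ (the entries $d^u_{ij}$ evaluated at the current solution). Let $\mathbf u_i(t)\in\mathbb R^d$ (continuously differentiable) and $p_i(t)\in\mathbb R$, $i=1,\dots,N_h$, solve the semi-discrete scheme (S1)–(S2) on a time interval. For $i\neq j$ define $$F_{ij}=\frac{\tilde a_{ij}}{2}|\mathbf u_j-\mathbf u_i|^2+\frac12\,\mathbf c_{ij}\cdot(\mathbf u_j-\mathbf u_i)\,(p_j-p_i)-\Big(\frac{\mathbf u_j+\mathbf u_i}{2}\cdot\mathbf c_{ij}\Big)\Big(\frac{|\mathbf u_j|^2}{2}+p_j+\frac{|\mathbf u_i|^2}{2}+p_i\Big)+(d^u_{ij}-\nu s_{ij})\Big(\frac{|\mathbf u_j|^2}{2}-\frac{|\mathbf u_i|^2}{2}\Big)+d^p_{ij}\Big(\frac{p_j^2}{2}-\frac{p_i^2}{2}\Big),$$ $$G_{ij}=-(d^u_{ij}-\nu s_{ij})\frac{|\mathbf u_j-\mathbf u_i|^2}{2}-d^p_{ij}\frac{(p_j-p_i)^2}{2}.$$ Then: (i) $F_{ij}=-F_{ji}$ and $G_{ij}=G_{ji}$; (ii) for every $i$, $$m_i\frac{d}{dt}\eta(\mathbf u_i)=\sum_{j\in\mathcal N_i\setminus\{i\}}\big(F_{ij}+G_{ij}\big),\qquad\text{hence}\qquad m_i\frac{d}{dt}\eta(\mathbf u_i)-\sum_{j\in\mathcal N_i\setminus\{i\}}F_{ij}\le 0;$$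 (iii) whenever $\mathbf c_{ij}\neq 0$, the numerical energy flux $\mathcal Q(\mathbf u_i,p_i,\mathbf u_j,p_j;\mathbf n_{ij}):=-F_{ij}/(2|\mathbf c_{ij}|)$, $\mathbf n_{ij}=\mathbf c_{ij}/|\mathbf c_{ij}|$, is consistent with the energy flux in the sense that for $\mathbf u_i=\mathbf u_j=\mathbf u$, $p_i=p_j=p$ it equals $(\eta(\mathbf u)+p)\,\mathbf u\cdot\mathbf n_{ij}$. Consequently $m_i\frac{d}{dt}\eta(\mathbf u_i)+\sum_{j\in\mathcal N_i\setminus\{i\}}2|\mathbf c_{ij}|\,\mathcal Q(\mathbf u_i,p_i,\mathbf u_j,p_j;\mathbf n_{ij})\le 0$ (sum over $j$ with $\mathbf c_{ij}\ne0$, the remaining $F_{ij}$ being included as $-F_{ij}$).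
   Context: Setting. Let $d\in\{2,3\}$ and let $\Omega\subset\mathbb R^d$ be a box on which periodic boundary conditions are imposed (all functions on $\Omega$ are periodic, so $\Omega$ is effectively a flat torus and integration by parts produces no boundary terms). $\mathcal T_h$ is a conforming simplicial mesh of $\Omega$ compatible with periodicity, with (periodically identified) vertices $\mathbf x_1,\dots,\mathbf x_{N_h}$; $\varphi_1,\dots,\varphi_{N_h}$ are the continuous piecewise-linear Lagrange basis functions ($\varphi_i(\mathbf x_j)=\delta_{ij}$), $V_h=\mathrm{span}\{\varphi_i\}$, $\mathbf V_h=(V_h)^d$. For $v_h\in V_h$ write $v_i=v_h(\mathbf x_i)$; similarly $\mathbf u_h=\sum_j\mathbf u_j\varphi_j$ for vector-valued functions. $\mathcal N_i$ is the set of indices $j$ (including $j=i$) for which the supports of $\varphi_i,\varphi_j$ overlap. Coefficients: $m_{ij}=\int_\Omega\varphi_i\varphi_j\,dx$, $m_i=\int_\Omega\varphi_i\,dx$, $\mathbf c_{ij}=\int_\Omega\varphi_i\nabla\varphi_j\,dx$, $s_{ij}=\int_\Omega\nabla\varphi_i\cdot\nabla\varphi_j\,dx$, and, for a given $\mathbf u_h=\sum_j\mathbf u_j\varphi_j$, $\tilde a_{ij}=\frac{\mathbf u_i+\mathbf u_j}{2}\cdot\mathbf c_{ij}$ and $a_{ij}=\frac12\int_\Omega[\varphi_i\,\mathbf u_h\cdot\nabla\varphi_j-\varphi_j\,\mathbf u_h\cdot\nabla\varphi_i]\,dx$. The kinetic energy is $\eta(\mathbf u)=|\mathbf u|^2/2$.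 Scheme. Given a viscosity $\nu\ge 0$ and symmetric matrices $D^u=(d^u_{ij})$, $D^p=(d^p_{ij})$ with zero row sums ($\sum_j d^u_{ij}=\sum_j d^p_{ij}=0$) and $d^u_{ij}=d^p_{ij}=0$ for $j\notin\mathcal N_i$ (the entries $d^u_{ij}$ may depend on the current velocity), the semi-discrete scheme is the system, for all $i,k=1,\dots,N_h$, (S1) $m_i\frac{d\mathbf u_i}{dt}=\sum_{j\in\mathcal N_i}\big[(d^u_{ij}-\tilde a_{ij}-\nu s_{ij})\mathbf u_j-\mathbf c_{ij}p_j\big]$, (S2) $0=\sum_{j\in\mathcal N_k}\big[d^p_{kj}p_j-\mathbf c_{kj}\cdot\mathbf u_j\big]$, where $\tilde a_{ij}$ is computed from the current $\mathbf u_h(t)$. *)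

theory Defs
  imports "HOL-Analysis.Analysis"
begin

definition eta :: "real^'d \<Rightarrow> real" where
  "eta v = (norm v)^2 / 2"

text \<open>Structural properties of the P1 finite element coefficients on the periodic mesh
  (vertex indices I = {1..N}, stencils Nb i): the stencil contains i and lies in I;
  c_ij = int phi_i grad phi_j is skew-symmetric (integration by parts on the torus);
  s_ij = int grad phi_i . grad phi_j is symmetric with zero row sums
  (partition of unity).  These are the only properties of the coefficients used.\<close>
definition periodic_P1_coeffs ::
  "nat set \<Rightarrow> (nat \<Rightarrow> nat set) \<Rightarrow> (nat \<Rightarrow> nat \<Rightarrow> real^'d) \<Rightarrow> (nat \<Rightarrow> nat \<Rightarrow> real) \<Rightarrow> bool" where
  "periodic_P1_coeffs I Nb c s \<longleftrightarrow>
     finite I \<and>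
     (\<forall>i\<in>I. i \<in> Nb i \<and> Nb i \<subseteq> I) \<and>
     (\<forall>i\<in>I. \<forall>j\<in>I. j \<in> Nb i \<longleftrightarrow> i \<in> Nb j) \<and>
     (\<forall>i\<in>I. \<forall>j\<in>I. c i j = - c j i) \<and>
     (\<forall>i\<in>I. \<forall>j\<in>I. s i j = s j i) \<and>
     (\<forall>i\<in>I. (\<Sum>j\<in>Nb i. s i j) = 0)"

definition atilde :: "real^'d \<Rightarrow> real^'d \<Rightarrow> real^'d \<Rightarrow> real" where
  "atilde cij ui uj = ((ui + uj) /\<^sub>R 2) \<bullet> cij"

text \<open>F_ij as a function of c_ij, du = d^u_ij - nu s_ij, dp = d^p_ij and the two states.\<close>
definition Fflux :: "real^'d \<Rightarrow> real \<Rightarrow> real \<Rightarrow> real^'d \<Rightarrow> real \<Rightarrow> real^'d \<Rightarrow> real \<Rightarrow> real" where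
  "Fflux cij du dp ui p_i uj p_j =
     atilde cij ui uj / 2 * (norm (uj - ui))^2
     + 1/2 * (cij \<bullet> (uj - ui)) * (p_j - p_i)
     - (((uj + ui) /\<^sub>R 2) \<bullet> cij) * ((norm uj)^2/2 + p_j + (norm ui)^2/2 + p_i)
     + du * ((norm uj)^2/2 - (norm ui)^2/2)
     + dp * (p_j^2/2 - p_i^2/2)"

definition Gdiss :: "real \<Rightarrow> real \<Rightarrow> real^'d \<Rightarrow> real \<Rightarrow> real^'d \<Rightarrow> real \<Rightarrow> real" where
  "Gdiss du dp ui p_i uj p_j = - du * (norm (uj - ui))^2 / 2 - dp * (p_j - p_i)^2 / 2"

definition Qflux :: "real^'d \<Rightarrow> real \<Rightarrow> real \<Rightarrow> real^'d \<Rightarrow> real \<Rightarrow> real^'d \<Rightarrow> real \<Rightarrow> real" where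
  "Qflux cij du dp ui p_i uj p_j = - Fflux cij du dp ui p_i uj p_j / (2 * norm cij)"

end

theory Submission
  imports Defs
begin

text \<open>Dotting (S1) with \<open>u\<^sub>i\<close> gives \<open>m\<^sub>i d\<eta>(u\<^sub>i)/dt\<close>. Each summand of the result, after adding
  \<open>p\<^sub>i\<close> times the (vanishing) summands of (S2) and subtracting \<open>|u\<^sub>i|\<^sup>2/2\<close> and \<open>p\<^sub>i\<^sup>2/2\<close> times
  the (vanishing) row sums of the dissipation matrices, is exactly \<open>F\<^sub>i\<^sub>j + G\<^sub>i\<^sub>j\<close>; this is a
  pointwise algebraic identity. Skew-symmetry of \<open>c\<^sub>i\<^sub>j\<close> makes \<open>F\<close> antisymmetric, and \<open>G\<^sub>i\<^sub>j \<le> 0\<close>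
  under the sign conditions on the off-diagonal dissipation coefficients.\<close>

lemma has_real_derivative_eta:
  assumes "(u has_vector_derivative v) (at t)"
  shows "((\<lambda>\<tau>. eta (u \<tau>)) has_real_derivative u t \<bullet> v) (at t)"
proof -
  have u: "(u has_derivative (\<lambda>h. h *\<^sub>R v)) (at t)"
    using assms by (simp add: has_vector_derivative_def)
  have "(\<lambda>h. u t \<bullet> (h *\<^sub>R v) + (h *\<^sub>R v) \<bullet> u t) = (\<lambda>h. (2 * (u t \<bullet> v)) * h)"
    by (auto simp: inner_commute algebra_simps)
  then have "((\<lambda>\<tau>. u \<tau> \<bullet> u \<tau>) has_real_derivative 2 * (u t \<bullet> v)) (at t)"
    using has_derivative_inner[OF u u] by (simp add: has_field_derivative_def)
  from DERIV_cdivide[OF this, of 2] show ?thesis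
    by (simp add: eta_def power2_norm_eq_inner)
qed

lemma Fflux_antisym:
  "Fflux (- c) l dp y q x p = - Fflux c l dp x p y q"
  unfolding Fflux_def atilde_def power2_norm_eq_inner
  by (simp add: inner_diff_left inner_diff_right inner_add_left inner_add_right inner_commute
      field_simps power2_eq_square)

lemma Gdiss_sym: "Gdiss l dp x p y q = Gdiss l dp y q x p"
  by (simp add: Gdiss_def norm_minus_commute power2_commute)

lemma Gdiss_nonpos:
  assumes "l \<ge> 0" and "dp \<ge> 0"
  shows "Gdiss l dp x p y q \<le> 0"
proof -
  have "l * (norm (y - x))\<^sup>2 \<ge> 0" and "dp * (q - p)\<^sup>2 \<ge> 0"
    using assms by simp_all
  then show ?thesis
    unfolding Gdiss_def by linarith
qed

lemma Fflux_plus_Gdiss: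
  "Fflux c l dp x p y q + Gdiss l dp x p y q =
     x \<bullet> ((l - atilde c x y) *\<^sub>R y - q *\<^sub>R c) + p * (dp * q - c \<bullet> y) - (x \<bullet> x) * l - p\<^sup>2 * dp"
  unfolding Fflux_def Gdiss_def atilde_def power2_norm_eq_inner
  by (simp add: inner_diff_left inner_diff_right inner_add_left inner_add_right inner_commute
      field_simps power2_eq_square)

lemma norm_times_Qflux:
  assumes "c \<noteq> 0"
  shows "2 * norm c * Qflux c l dp x p y q = - Fflux c l dp x p y q"
  using assms by (simp add: Qflux_def)

lemma Qflux_consistent:
  assumes "c \<noteq> 0"
  shows "Qflux c l dp v q v q = (eta v + q) * (v \<bullet> (c /\<^sub>R norm c))"
  using assms unfolding Qflux_def Fflux_def atilde_def eta_def power2_norm_eq_inner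
  by (simp add: inner_add_left inner_add_right inner_commute) (simp add: field_simps)

lemma node_energy_balance:
  assumes "finite J" and "i \<in> J"
    and "y i = x" and "q i = p" and "c i = 0"
    and row_l: "(\<Sum>j\<in>J. l j) = 0" and row_dp: "(\<Sum>j\<in>J. dp j) = 0"
    and momentum: "m *\<^sub>R v = (\<Sum>j\<in>J. (l j - atilde (c j) x (y j)) *\<^sub>R y j - q j *\<^sub>R c j)"
    and mass: "0 = (\<Sum>j\<in>J. dp j * q j - c j \<bullet> y j)"
  shows "m * (x \<bullet> v) =
    (\<Sum>j\<in>J - {i}. Fflux (c j) (l j) (dp j) x p (y j) (q j) + Gdiss (l j) (dp j) x p (y j) (q j))"
    (is "_ = (\<Sum>j\<in>J - {i}. ?E j)")
proof -
  have "?E i = 0"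
    using assms(3-5) by (simp add: Fflux_def Gdiss_def atilde_def)
  then have "(\<Sum>j\<in>J - {i}. ?E j) = (\<Sum>j\<in>J. ?E j)"
    using assms(1,2) by (simp add: sum.remove)
  also have "\<dots> = x \<bullet> (\<Sum>j\<in>J. (l j - atilde (c j) x (y j)) *\<^sub>R y j - q j *\<^sub>R c j)
      + p * (\<Sum>j\<in>J. dp j * q j - c j \<bullet> y j) - (x \<bullet> x) * (\<Sum>j\<in>J. l j) - p\<^sup>2 * (\<Sum>j\<in>J. dp j)"
    unfolding Fflux_plus_Gdiss
    by (simp add: sum.distrib sum_subtractf inner_sum_right inner_diff_right sum_distrib_left right_diff_distrib)
  also have "\<dots> = m * (x \<bullet> v)"
    by (simp add: row_l row_dp flip: mass momentum)
  finally show ?thesis ..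
qed

lemma periodic_P1_coeffsD:
  assumes "periodic_P1_coeffs I Nb c s" and "i \<in> I" and "j \<in> I"
  shows "finite (Nb i)" and "i \<in> Nb i" and "Nb i \<subseteq> I"
    and "c i j = - c j i" and "c i i = 0" and "s i j = s j i" and "(\<Sum>k\<in>Nb i. s i k) = 0"
proof -
  show "i \<in> Nb i" "Nb i \<subseteq> I" "c i j = - c j i" "s i j = s j i" "(\<Sum>k\<in>Nb i. s i k) = 0"
    using assms unfolding periodic_P1_coeffs_def by blast+
  then show "finite (Nb i)"
    using assms(1) finite_subset unfolding periodic_P1_coeffs_def by blast
  have "c i i = - c i i"
    using assms(1,2) unfolding periodic_P1_coeffs_def by blast
  then show "c i i = 0"
    by (simp add: vec_eq_iff)
qed

lemma balance_minus_fluxes_nonpos: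
  assumes "finite S"
    and balance: "E = (\<Sum>j\<in>S. F j + G j)"
    and dissipation: "\<And>j. j \<in> S \<Longrightarrow> G j \<le> 0"
    and flux: "\<And>j. j \<in> S \<Longrightarrow> c j \<noteq> 0 \<Longrightarrow> 2 * norm (c j) * Q j = - F j"
  shows "E - (\<Sum>j\<in>S. F j) \<le> 0"
    and "E + (\<Sum>j\<in>{j\<in>S. c j \<noteq> 0}. 2 * norm (c j) * Q j) - (\<Sum>j\<in>{j\<in>S. c j = 0}. F j) \<le> 0"
proof -
  have "(\<Sum>j\<in>S. G j) \<le> 0"
    using dissipation by (rule sum_nonpos)
  then show E_le: "E - (\<Sum>j\<in>S. F j) \<le> 0"
    unfolding balance sum.distrib by linarith
  have "S = {j\<in>S. c j \<noteq> 0} \<union> {j\<in>S. c j = 0}" by blast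
  then have "(\<Sum>j\<in>S. F j) = (\<Sum>j\<in>{j\<in>S. c j \<noteq> 0}. F j) + (\<Sum>j\<in>{j\<in>S. c j = 0}. F j)"
    using \<open>finite S\<close> by (metis (no_types, lifting) sum.union_disjoint disjoint_iff finite_Un mem_Collect_eq)
  moreover have "(\<Sum>j\<in>{j\<in>S. c j \<noteq> 0}. 2 * norm (c j) * Q j) = - (\<Sum>j\<in>{j\<in>S. c j \<noteq> 0}. F j)"
    using flux by (simp add: sum_negf[symmetric])
  ultimately show "E + (\<Sum>j\<in>{j\<in>S. c j \<noteq> 0}. 2 * norm (c j) * Q j) - (\<Sum>j\<in>{j\<in>S. c j = 0}. F j) \<le> 0"
    using E_le by linarith
qed

theorem theorem1:
  fixes N :: nat and Nb :: "nat \<Rightarrow> nat set"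
    and m :: "nat \<Rightarrow> real" and c :: "nat \<Rightarrow> nat \<Rightarrow> real^'d" and s :: "nat \<Rightarrow> nat \<Rightarrow> real"
    and \<nu> :: real and du dp :: "real \<Rightarrow> nat \<Rightarrow> nat \<Rightarrow> real"
    and u u' :: "nat \<Rightarrow> real \<Rightarrow> real^'d" and p :: "nat \<Rightarrow> real \<Rightarrow> real"
    and a b :: real
  assumes dim: "CARD('d) = 2 \<or> CARD('d) = 3"
    and coeffs: "periodic_P1_coeffs {1..N} Nb c s"
    and nu: "\<nu> \<ge> 0"
    and ab: "a < b"
    and du_sym: "\<And>t i j. t \<in> {a<..<b} \<Longrightarrow> i \<in> {1..N} \<Longrightarrow> j \<in> {1..N} \<Longrightarrow> du t i j = du t j i"
    and dp_sym: "\<And>t i j. t \<in> {a<..<b} \<Longrightarrow> i \<in> {1..N} \<Longrightarrow> j \<in> {1..N} \<Longrightarrow> dp t i j = dp t j i"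
    and du_row: "\<And>t i. t \<in> {a<..<b} \<Longrightarrow> i \<in> {1..N} \<Longrightarrow> (\<Sum>j\<in>Nb i. du t i j) = 0"
    and dp_row: "\<And>t i. t \<in> {a<..<b} \<Longrightarrow> i \<in> {1..N} \<Longrightarrow> (\<Sum>j\<in>Nb i. dp t i j) = 0"
    and du_supp: "\<And>t i j. t \<in> {a<..<b} \<Longrightarrow> i \<in> {1..N} \<Longrightarrow> j \<in> {1..N} \<Longrightarrow> j \<notin> Nb i \<Longrightarrow> du t i j = 0"
    and dp_supp: "\<And>t i j. t \<in> {a<..<b} \<Longrightarrow> i \<in> {1..N} \<Longrightarrow> j \<in> {1..N} \<Longrightarrow> j \<notin> Nb i \<Longrightarrow> dp t i j = 0"
    and du_pos: "\<And>t i j. t \<in> {a<..<b} \<Longrightarrow> i \<in> {1..N} \<Longrightarrow> j \<in> Nb i \<Longrightarrow> j \<noteq> i \<Longrightarrow> du t i j - \<nu> * s i j \<ge> 0"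
    and dp_pos: "\<And>t i j. t \<in> {a<..<b} \<Longrightarrow> i \<in> {1..N} \<Longrightarrow> j \<in> Nb i \<Longrightarrow> j \<noteq> i \<Longrightarrow> dp t i j \<ge> 0"
    and u_deriv: "\<And>t i. t \<in> {a<..<b} \<Longrightarrow> i \<in> {1..N} \<Longrightarrow> (u i has_vector_derivative u' i t) (at t)"
    and u'_cont: "\<And>i. i \<in> {1..N} \<Longrightarrow> continuous_on {a<..<b} (u' i)"
    and S1: "\<And>t i. t \<in> {a<..<b} \<Longrightarrow> i \<in> {1..N} \<Longrightarrow>
       m i *\<^sub>R u' i t = (\<Sum>j\<in>Nb i. (du t i j - atilde (c i j) (u i t) (u j t) - \<nu> * s i j) *\<^sub>R u j t
                                        - p j t *\<^sub>R c i j)"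
    and S2: "\<And>t k. t \<in> {a<..<b} \<Longrightarrow> k \<in> {1..N} \<Longrightarrow>
       0 = (\<Sum>j\<in>Nb k. dp t k j * p j t - c k j \<bullet> u j t)"
  defines "F \<equiv> \<lambda>t i j. Fflux (c i j) (du t i j - \<nu> * s i j) (dp t i j) (u i t) (p i t) (u j t) (p j t)"
    and "G \<equiv> \<lambda>t i j. Gdiss (du t i j - \<nu> * s i j) (dp t i j) (u i t) (p i t) (u j t) (p j t)"
    and "Q \<equiv> \<lambda>t i j. Qflux (c i j) (du t i j - \<nu> * s i j) (dp t i j) (u i t) (p i t) (u j t) (p j t)"
  shows
    "(\<forall>t\<in>{a<..<b}. \<forall>i\<in>{1..N}. \<forall>j\<in>{1..N}. i \<noteq> j \<longrightarrow> F t i j = - F t j i \<and> G t i j = G t j i)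
     \<and> (\<forall>t\<in>{a<..<b}. \<forall>i\<in>{1..N}. \<exists>D. ((\<lambda>\<tau>. eta (u i \<tau>)) has_real_derivative D) (at t)
          \<and> m i * D = (\<Sum>j\<in>Nb i - {i}. F t i j + G t i j)
          \<and> m i * D - (\<Sum>j\<in>Nb i - {i}. F t i j) \<le> 0
          \<and> m i * D + (\<Sum>j\<in>{j\<in>Nb i - {i}. c i j \<noteq> 0}. 2 * norm (c i j) * Q t i j)
                   - (\<Sum>j\<in>{j\<in>Nb i - {i}. c i j = 0}. F t i j) \<le> 0)
     \<and> (\<forall>(cij::real^'d) du0 dp0 v q. cij \<noteq> 0 \<longrightarrow>
          Qflux cij du0 dp0 v q v q = (eta v + q) * (v \<bullet> (cij /\<^sub>R norm cij)))"
proof -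
  have F_G_symmetry: "F t i j = - F t j i \<and> G t i j = G t j i"
    if t: "t \<in> {a<..<b}" and i: "i \<in> {1..N}" and j: "j \<in> {1..N}" for t i j
    using Fflux_antisym[of "c j i" "du t j i - \<nu> * s j i" "dp t j i" "u i t" "p i t" "u j t" "p j t"]
      Gdiss_sym periodic_P1_coeffsD(4,6)[OF coeffs i j] du_sym[OF t i j] dp_sym[OF t i j]
    unfolding F_def G_def by simp
  have energy: "\<exists>D. ((\<lambda>\<tau>. eta (u i \<tau>)) has_real_derivative D) (at t)
          \<and> m i * D = (\<Sum>j\<in>Nb i - {i}. F t i j + G t i j)
          \<and> m i * D - (\<Sum>j\<in>Nb i - {i}. F t i j) \<le> 0
          \<and> m i * D + (\<Sum>j\<in>{j\<in>Nb i - {i}. c i j \<noteq> 0}. 2 * norm (c i j) * Q t i j)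
                   - (\<Sum>j\<in>{j\<in>Nb i - {i}. c i j = 0}. F t i j) \<le> 0"
    if t: "t \<in> {a<..<b}" and i: "i \<in> {1..N}" for t i
  proof (intro exI conjI)
    note Nb = periodic_P1_coeffsD[OF coeffs i i]
    have "(\<Sum>j\<in>Nb i. du t i j - \<nu> * s i j) = 0"
      using du_row[OF t i] Nb(7) by (simp add: sum_subtractf flip: sum_distrib_left)
    moreover have "m i *\<^sub>R u' i t = (\<Sum>j\<in>Nb i.
        (du t i j - \<nu> * s i j - atilde (c i j) (u i t) (u j t)) *\<^sub>R u j t - p j t *\<^sub>R c i j)"
      using S1[OF t i] by (simp add: diff_diff_eq add.commute)
    ultimately show balance: "m i * (u i t \<bullet> u' i t) = (\<Sum>j\<in>Nb i - {i}. F t i j + G t i j)"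
      unfolding F_def G_def
      by (intro node_energy_balance[where y = "\<lambda>j. u j t" and q = "\<lambda>j. p j t"])
        (simp_all add: Nb(1,2,5) dp_row[OF t i] S2[OF t i])
    have dissipation: "G t i j \<le> 0" if "j \<in> Nb i - {i}" for j
      unfolding G_def using that du_pos[OF t i] dp_pos[OF t i] by (simp add: Gdiss_nonpos)
    have flux: "2 * norm (c i j) * Q t i j = - F t i j" if "j \<in> Nb i - {i}" and "c i j \<noteq> 0" for j
      unfolding Q_def F_def using that(2) by (rule norm_times_Qflux)
    from balance_minus_fluxes_nonpos[OF _ balance dissipation flux] Nb(1)
    show "m i * (u i t \<bullet> u' i t) - (\<Sum>j\<in>Nb i - {i}. F t i j) \<le> 0"
      and "m i * (u i t \<bullet> u' i t) + (\<Sum>j\<in>{j\<in>Nb i - {i}. c i j \<noteq> 0}. 2 * norm (c i j) * Q t i j)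
             - (\<Sum>j\<in>{j\<in>Nb i - {i}. c i j = 0}. F t i j) \<le> 0"
      by simp_all
    show "((\<lambda>\<tau>. eta (u i \<tau>)) has_real_derivative u i t \<bullet> u' i t) (at t)"
      using u_deriv[OF t i] by (rule has_real_derivative_eta)
  qed
  show ?thesis
    using F_G_symmetry energy Qflux_consistent by blast
qed

end
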